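(* Let $X$ be a CAT(0) space, $T:X\to X$, $C\subseteq X$ nonempty and $\varphi:[0,\infty)\to[0,\infty)$ an increasing function vanishing only at $0$. If $T$ is uniformly firmly nonexpansive on $C$ with modulus $\varphi$, then $T$ is uniformly $(P_2)$ on $C$ with modulus $\varphi$.
   Context: A geodesic space $(X,d)$ is CAT(0) if for all $z\in X$, all geodesics $\gamma:[a,b]\to X$ and all $t\in[0,1]$, $d^2(z,\gamma((1-t)a+tb))\le(1-t)d^2(z,\gamma(a))+td^2(z,\gamma(b))-t(1-t)d^2(\gamma(a),\gamma(b))$; $(1-t)x+ty$ denotes the point at distance $t\,d(x,y)$ from $x$ on the unique geodesic from $x$ to $y$. $T$ is uniformly firmly nonexpansive on $C$ with modulus $\varphi$ if $T(C)\subseteq C$ and for all $x,y\in C$, $t\in[0,1]$: $d^2(Tx,Ty)\le d^2((1-t)x+tTx,(1-t)y+tTy)-2(1-t)\varphi(d(Tx,Ty))$. $T$ is uniformly $(P_2)$ on $C$ with modulus $\varphi$ if $T(C)\subseteq C$ and for all $x,y\in C$: $2d^2(Tx,Ty)\le d^2(x,Ty)+d^2(y,Tx)-d^2(x,Tx)-d^2(y,Ty)-2\varphi(d(Tx,Ty))$. *)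

theory Defs
  imports "HOL-Analysis.Analysis"
begin

text \<open>A metric on the whole type (the space X is the carrier UNIV of type 'a).\<close>
definition is_metric :: "('a \<Rightarrow> 'a \<Rightarrow> real) \<Rightarrow> bool" where
  "is_metric d \<longleftrightarrow> (\<forall>x y. d x y = 0 \<longleftrightarrow> x = y) \<and> (\<forall>x y. d x y = d y x)
     \<and> (\<forall>x y z. d x z \<le> d x y + d y z)"

definition geodesic :: "('a \<Rightarrow> 'a \<Rightarrow> real) \<Rightarrow> (real \<Rightarrow> 'a) \<Rightarrow> real \<Rightarrow> real \<Rightarrow> bool" where
  "geodesic d \<gamma> a b \<longleftrightarrow> a \<le> b \<and> (\<forall>s\<in>{a..b}. \<forall>t\<in>{a..b}. d (\<gamma> s) (\<gamma> t) = \<bar>s - t\<bar>)"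

definition geodesic_space :: "('a \<Rightarrow> 'a \<Rightarrow> real) \<Rightarrow> bool" where
  "geodesic_space d \<longleftrightarrow> is_metric d \<and>
     (\<forall>x y. \<exists>\<gamma> a b. geodesic d \<gamma> a b \<and> \<gamma> a = x \<and> \<gamma> b = y)"

definition CAT0 :: "('a \<Rightarrow> 'a \<Rightarrow> real) \<Rightarrow> bool" where
  "CAT0 d \<longleftrightarrow> geodesic_space d \<and>
     (\<forall>z \<gamma> a b t. geodesic d \<gamma> a b \<longrightarrow> t \<in> {0..1} \<longrightarrow>
        (d z (\<gamma> ((1 - t) * a + t * b)))\<^sup>2
          \<le> (1 - t) * (d z (\<gamma> a))\<^sup>2 + t * (d z (\<gamma> b))\<^sup>2 - t * (1 - t) * (d (\<gamma> a) (\<gamma> b))\<^sup>2)"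

text \<open>(1-t)x + ty: the point at parameter t on the (unique, in a CAT(0) space) geodesic from x to y.\<close>
definition geo_comb :: "('a \<Rightarrow> 'a \<Rightarrow> real) \<Rightarrow> real \<Rightarrow> 'a \<Rightarrow> 'a \<Rightarrow> 'a" where
  "geo_comb d t x y = (THE p. \<exists>\<gamma> a b. geodesic d \<gamma> a b \<and> \<gamma> a = x \<and> \<gamma> b = y
                                 \<and> p = \<gamma> ((1 - t) * a + t * b))"

definition unif_firmly_nonexp ::
  "('a \<Rightarrow> 'a \<Rightarrow> real) \<Rightarrow> ('a \<Rightarrow> 'a) \<Rightarrow> 'a set \<Rightarrow> (real \<Rightarrow> real) \<Rightarrow> bool" where
  "unif_firmly_nonexp d T C \<phi> \<longleftrightarrow> T ` C \<subseteq> C \<and>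
     (\<forall>x\<in>C. \<forall>y\<in>C. \<forall>t\<in>{0..1}.
        (d (T x) (T y))\<^sup>2 \<le> (d (geo_comb d t x (T x)) (geo_comb d t y (T y)))\<^sup>2
                            - 2 * (1 - t) * \<phi> (d (T x) (T y)))"

definition unif_P2 ::
  "('a \<Rightarrow> 'a \<Rightarrow> real) \<Rightarrow> ('a \<Rightarrow> 'a) \<Rightarrow> 'a set \<Rightarrow> (real \<Rightarrow> real) \<Rightarrow> bool" where
  "unif_P2 d T C \<phi> \<longleftrightarrow> T ` C \<subseteq> C \<and>
     (\<forall>x\<in>C. \<forall>y\<in>C.
        2 * (d (T x) (T y))\<^sup>2 \<le> (d x (T y))\<^sup>2 + (d y (T x))\<^sup>2 - (d x (T x))\<^sup>2 - (d y (T y))\<^sup>2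
                                - 2 * \<phi> (d (T x) (T y)))"

end

theory Submission
  imports Defs
begin

text \<open>Apply the CAT(0) inequality three times to the geodesic points
  \<open>x\<^sub>t = (1-t)x + tTx\<close> and \<open>y\<^sub>t = (1-t)y + tTy\<close>: this bounds \<open>d(x\<^sub>t,y\<^sub>t)\<^sup>2\<close> by a
  quadratic expression in \<open>t\<close> in the six distances between \<open>x, Tx, y, Ty\<close>.
  Inserting it into the firm nonexpansiveness inequality and dividing by \<open>1 - t\<close>
  leaves \<open>(1+t)d(Tx,Ty)\<^sup>2 \<le> (1-t)d(x,y)\<^sup>2 + t\<cdot>A - 2\<phi>(d(Tx,Ty))\<close>, where \<open>A\<close> is the
  combination of distances occurring in \<open>(P\<^sub>2)\<close>; letting \<open>t \<rightarrow> 1\<close> gives \<open>(P\<^sub>2)\<close>.\<close>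

lemma geodesic_point_dists:
  assumes g: "geodesic d \<gamma> a b" and t: "t \<in> {0..1}"
  shows "d (\<gamma> a) (\<gamma> ((1-t)*a+t*b)) = t*(b-a)"
    and "d (\<gamma> ((1-t)*a+t*b)) (\<gamma> b) = (1-t)*(b-a)"
    and "d (\<gamma> a) (\<gamma> b) = b - a"
proof -
  have ab: "a \<le> b" and iso: "\<And>s u. s\<in>{a..b} \<Longrightarrow> u\<in>{a..b} \<Longrightarrow> d (\<gamma> s) (\<gamma> u) = \<bar>s - u\<bar>"
    using g unfolding geodesic_def by auto
  have step: "0 \<le> t*(b-a)" "t*(b-a) \<le> b - a"
    using t ab by (auto simp: mult_left_le_one_le)
  moreover have "(1-t)*a+t*b = a + t*(b-a)"
    by (simp add: algebra_simps)
  ultimately have m: "(1-t)*a+t*b \<in> {a..b}"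
    by auto
  show "d (\<gamma> a) (\<gamma> ((1-t)*a+t*b)) = t*(b-a)"
    using iso[OF _ m] ab step by (simp add: algebra_simps)
  show "d (\<gamma> ((1-t)*a+t*b)) (\<gamma> b) = (1-t)*(b-a)"
    using iso[OF m] ab step by (simp add: algebra_simps)
  show "d (\<gamma> a) (\<gamma> b) = b - a"
    using iso[of a b] ab by auto
qed

lemma CAT0_imp_is_metric: "CAT0 d \<Longrightarrow> is_metric d"
  unfolding CAT0_def geodesic_space_def by auto

lemma CAT0_geodesic_point_unique:
  assumes c: "CAT0 d" and t: "t \<in> {0..1}"
    and g1: "geodesic d \<gamma>1 a1 b1" "\<gamma>1 a1 = x" "\<gamma>1 b1 = y"
    and g2: "geodesic d \<gamma>2 a2 b2" "\<gamma>2 a2 = x" "\<gamma>2 b2 = y"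
  shows "\<gamma>1 ((1-t)*a1+t*b1) = \<gamma>2 ((1-t)*a2+t*b2)"
proof -
  let ?p = "\<gamma>1 ((1-t)*a1+t*b1)" and ?q = "\<gamma>2 ((1-t)*a2+t*b2)"
  have sym: "\<And>u v. d u v = d v u" and zero: "\<And>u v. d u v = 0 \<longleftrightarrow> u = v"
    using CAT0_imp_is_metric[OF c] unfolding is_metric_def by auto
  define L where "L = d x y"
  have L: "L = b1 - a1"
    using geodesic_point_dists(3)[OF g1(1) t] g1 L_def by simp
  have "d ?p x = t * L" "d ?p y = (1-t) * L"
    using geodesic_point_dists(1,2)[OF g1(1) t] g1 L sym by metis+
  moreover have "(d ?p ?q)\<^sup>2 \<le> (1 - t) * (d ?p x)\<^sup>2 + t * (d ?p y)\<^sup>2 - t * (1 - t) * (d x y)\<^sup>2"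
    using c g2 t unfolding CAT0_def by blast
  ultimately have "(d ?p ?q)\<^sup>2 \<le> (1 - t) * (t*L)\<^sup>2 + t * ((1-t)*L)\<^sup>2 - t * (1 - t) * L\<^sup>2"
    by (simp add: L_def)
  also have "\<dots> = 0"
    by (simp add: power2_eq_square algebra_simps)
  finally show ?thesis
    using zero by simp
qed

lemma CAT0_geo_comb_eq:
  assumes c: "CAT0 d" and t: "t \<in> {0..1}"
    and g: "geodesic d \<gamma> a b" "\<gamma> a = x" "\<gamma> b = y"
  shows "geo_comb d t x y = \<gamma> ((1-t)*a+t*b)"
  unfolding geo_comb_def
proof (rule the_equality)
  fix p assume "\<exists>\<gamma>' a' b'. geodesic d \<gamma>' a' b' \<and> \<gamma>' a' = x \<and> \<gamma>' b' = y \<and> p = \<gamma>' ((1-t)*a'+t*b')"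
  then show "p = \<gamma> ((1-t)*a+t*b)"
    using CAT0_geodesic_point_unique[OF c t _ _ _ g] by metis
qed (use g in blast)

lemma CAT0_geo_comb_ineq:
  assumes c: "CAT0 d" and t: "t \<in> {0..1}"
  shows "(d z (geo_comb d t x y))\<^sup>2 \<le> (1 - t) * (d z x)\<^sup>2 + t * (d z y)\<^sup>2 - t * (1 - t) * (d x y)\<^sup>2"
proof -
  obtain \<gamma> a b where g: "geodesic d \<gamma> a b" "\<gamma> a = x" "\<gamma> b = y"
    using c unfolding CAT0_def geodesic_space_def by blast
  then show ?thesis
    using c t CAT0_geo_comb_eq[OF c t g] unfolding CAT0_def by auto
qed

lemma CAT0_geo_comb_dist_le:
  assumes c: "CAT0 d" and t: "t \<in> {0..1}"
  shows "(d (geo_comb d t x u) (geo_comb d t y v))\<^sup>2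
    \<le> (1-t)\<^sup>2 * (d x y)\<^sup>2 + t\<^sup>2 * (d u v)\<^sup>2
       + t * (1-t) * ((d x v)\<^sup>2 + (d y u)\<^sup>2 - (d x u)\<^sup>2 - (d y v)\<^sup>2)"
proof -
  have sym: "\<And>p q. d p q = d q p"
    using CAT0_imp_is_metric[OF c] unfolding is_metric_def by auto
  define xt yt where "xt = geo_comb d t x u" and "yt = geo_comb d t y v"
  have "(d yt xt)\<^sup>2 \<le> (1 - t) * (d yt x)\<^sup>2 + t * (d yt u)\<^sup>2 - t * (1 - t) * (d x u)\<^sup>2"
    unfolding xt_def by (rule CAT0_geo_comb_ineq[OF c t])
  moreover have "(1-t) * (d x yt)\<^sup>2 \<le> (1-t) * ((1 - t) * (d x y)\<^sup>2 + t * (d x v)\<^sup>2 - t * (1 - t) * (d y v)\<^sup>2)"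
    using t unfolding yt_def by (intro mult_left_mono CAT0_geo_comb_ineq[OF c t]) auto
  moreover have "t * (d u yt)\<^sup>2 \<le> t * ((1 - t) * (d u y)\<^sup>2 + t * (d u v)\<^sup>2 - t * (1 - t) * (d y v)\<^sup>2)"
    using t unfolding yt_def by (intro mult_left_mono CAT0_geo_comb_ineq[OF c t]) auto
  ultimately show ?thesis
    unfolding xt_def[symmetric] yt_def[symmetric]
    using sym[of yt xt] sym[of yt x] sym[of yt u] sym[of u y]
    by (simp add: power2_eq_square algebra_simps)
qed

lemma nonpos_if_le_one_minus_mult:
  fixes c K :: real
  assumes "\<And>t. 0 \<le> t \<Longrightarrow> t < 1 \<Longrightarrow> c \<le> (1-t) * K"
  shows "c \<le> 0"
proof -
  have "((\<lambda>t. (1-t) * K) \<longlongrightarrow> 0) (at_left 1)"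
    by (auto intro!: tendsto_eq_intros)
  moreover have "\<forall>\<^sub>F t in at_left 1. c \<le> (1-t) * K"
    using eventually_at_left_real[of 0 "1::real"] by (auto elim!: eventually_mono intro: assms)
  ultimately show ?thesis
    by (rule tendsto_lowerbound) simp
qed

text \<open>Only the CAT(0) property and firm nonexpansiveness are used.\<close>

theorem proposition4p2:
  fixes d :: "'a \<Rightarrow> 'a \<Rightarrow> real" and T :: "'a \<Rightarrow> 'a" and C :: "'a set"
    and \<phi> :: "real \<Rightarrow> real"
  assumes "CAT0 d"
    and "C \<noteq> {}"
    and "\<forall>s\<ge>0. \<phi> s \<ge> 0"
    and "mono_on {0..} \<phi>"
    and "\<forall>s\<ge>0. \<phi> s = 0 \<longleftrightarrow> s = 0"
    and "unif_firmly_nonexp d T C \<phi>"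
  shows "unif_P2 d T C \<phi>"
  unfolding unif_P2_def
proof (intro conjI ballI)
  show "T ` C \<subseteq> C"
    using assms(6) unfolding unif_firmly_nonexp_def by blast
  fix x y assume x: "x \<in> C" and y: "y \<in> C"
  define D A \<Phi> where "D = (d (T x) (T y))\<^sup>2"
    and "A = (d x (T y))\<^sup>2 + (d y (T x))\<^sup>2 - (d x (T x))\<^sup>2 - (d y (T y))\<^sup>2"
    and "\<Phi> = \<phi> (d (T x) (T y))"
  have "2*D - A + 2*\<Phi> \<le> 0"
  proof (rule nonpos_if_le_one_minus_mult)
    fix t :: real assume t0: "0 \<le> t" and t1: "t < 1"
    then have t: "t \<in> {0..1}" by simp
    have "D \<le> (d (geo_comb d t x (T x)) (geo_comb d t y (T y)))\<^sup>2 - 2 * (1 - t) * \<Phi>"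
      using assms(6) x y t unfolding unif_firmly_nonexp_def D_def \<Phi>_def by blast
    also have "\<dots> \<le> (1-t)\<^sup>2 * (d x y)\<^sup>2 + t\<^sup>2 * D + t * (1-t) * A - 2 * (1 - t) * \<Phi>"
      using CAT0_geo_comb_dist_le[OF assms(1) t, of x "T x" y "T y"]
      unfolding D_def A_def by linarith
    finally have "(1-t) * (2*D - A + 2*\<Phi>) \<le> (1-t) * ((1-t) * ((d x y)\<^sup>2 + D - A))"
      by (simp add: power2_eq_square algebra_simps)
    then show "2*D - A + 2*\<Phi> \<le> (1-t) * ((d x y)\<^sup>2 + D - A)"
      using t1 by simp
  qed
  then show "2 * (d (T x) (T y))\<^sup>2 \<le> (d x (T y))\<^sup>2 + (d y (T x))\<^sup>2 - (d x (T x))\<^sup>2 - (d y (T y))\<^sup>2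
      - 2 * \<phi> (d (T x) (T y))"
    unfolding D_def A_def \<Phi>_def by simp
qed

end
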